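(* In the setting described in the context, let $\theta_0\in\Theta$ and $h_0,h'\in H$ be such that both pairs $(\theta_0,h_0)$ and $(\theta_0,h')$ satisfy Assumptions A1–A3 below, and suppose that $$\mathbb E[h_0(\mathbf x,\mathbf e)\mid\mathbf x;\theta_0]=\mathbb E[h'(\mathbf x,\mathbf e)\mid\mathbf x;\theta_0]\quad\text{almost surely}.$$ Then $h'=h_0$, i.e. $h'(\mathbf x,\mathbf e)=h_0(\mathbf x,\mathbf e)$ almost surely. (That is, if the payoff parameter $\theta_0$ is identified, then the distribution of play $h_0$ is identified.)
   Context: Players $I=\{1,\dots,d_I\}$, $2\le d_I<\infty$, each choose $y_i\in\{0,1\}$; $Y=\{0,1\}^{d_I}$, $y_{-i}=(y_j)_{j\ne i}$. There is a random vector $(\mathbf z,\mathbf w,\mathbf e,\mathbf y)$: $\mathbf w$ has support $W\subseteq\mathbb R^{d_W}$, $\mathbf z=(\mathbf z_i)_{i\in I}\in\mathbb R^{d_I}$, $\mathbf x=(\mathbf z,\mathbf w)$ (values in $X$) observed covariates, $\mathbf e\in\mathbb R^{d_I}$ unobserved payoff shocks, $\mathbf y\in Y$ observed outcome; the distribution of $\mathbf x$ is fixed. A parameter is $\theta=(\alpha,\beta,\Sigma)$ with measurable $\alpha_{i,y_{-i}}:W\to\mathbb R$, $\beta_i:W\to\mathbb R$, $\Sigma:W\to\mathbb R^{d_I\times d_I}$; $\Theta$ is the set of parameters. Player $i$'s payoff from $y$ at $(x,e)$, $x=(z,w)$, is $y_i(\alpha_{i,y_{-i}}(w)+\beta_i(w)z_i-e_i)$.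 A distribution of play is a measurable $h:Y\times X\times\mathbb R^{d_I}\to[0,1]$ with $\sum_y h(y,x,e)=1$ (interpreted as $\Pr(\mathbf y=y\mid\mathbf x=x,\mathbf e=e)$); $H$ is the set of these. $\mathbb E[h(\mathbf x,\mathbf e)\mid\mathbf x;\theta]$ denotes the expectation of $h(\mathbf x,\mathbf e)=(h(y,\mathbf x,\mathbf e))_{y\in Y}$ with respect to the conditional law $N(0,\Sigma(\mathbf w))$ of $\mathbf e$ given $\mathbf x$ implied by $\theta$. Assumptions on a pair $(\theta,h)$: (A1) for all $w\in W$ the support of $\mathbf z$ given $\mathbf w=w$ is $\mathbb R^{d_I}$, and $\beta_i(w)\ne0$ for all $i,w$; (A2) $\mathbf e\mid(\mathbf z=z,\mathbf w=w)\sim N(0,\Sigma(w))$ for all $z,w$, with $\Sigma(w)$ symmetric positive definite and $\Sigma_{ii}(w)=1$; (A3) there is a measurable $\tilde h$ with $h(\mathbf x,\mathbf e)=\tilde h(\mathbf w,\mathbf v)$ a.s., where $\mathbf v_i=\beta_i(\mathbf w)\mathbf z_i-\mathbf e_i$. *)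

theory Defs
  imports "HOL-Analysis.Analysis" "HOL-Probability.Probability"
begin

text \<open>Players are indexed by a finite type 'i (d_I = CARD('i)); an outcome y in Y = {0,1}^{d_I}
  is a function 'i => bool.  Covariates are x = (z, w) with z :: real^'i and w :: 'w
  (a Euclidean space, W is a subset of it).\<close>

definition mvn_density :: "real^'n^'n \<Rightarrow> real^'n \<Rightarrow> real" where
  "mvn_density S e =
     exp (- (e \<bullet> (matrix_inv S *v e)) / 2) / sqrt ((2 * pi) ^ CARD('n) * det S)"

definition mvn :: "real^'n^'n \<Rightarrow> (real^'n) measure" where
  "mvn S = density lborel (\<lambda>e. ennreal (mvn_density S e))"

definition support_of :: "'a::topological_space measure \<Rightarrow> 'a set" where
  "support_of M = {x. \<forall>U. open U \<and> x \<in> U \<longrightarrow> emeasure M U > 0}"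

text \<open>The parameter space Theta: measurable alpha, beta, Sigma.
  alpha i Y' w stands for alpha_{i,y_{-i}}(w), where y_{-i} is encoded by the set Y' of
  other players choosing 1 (only subsets of UNIV - {i} are relevant).\<close>
definition in_Theta ::
  "('i \<Rightarrow> 'i set \<Rightarrow> 'w::euclidean_space \<Rightarrow> real) \<Rightarrow> ('i \<Rightarrow> 'w \<Rightarrow> real)
     \<Rightarrow> ('w \<Rightarrow> real^'i^'i) \<Rightarrow> bool" where
  "in_Theta \<alpha> \<beta> \<Sigma> \<longleftrightarrow>
     (\<forall>i Y'. \<alpha> i Y' \<in> borel_measurable borel) \<and>
     (\<forall>i. \<beta> i \<in> borel_measurable borel) \<and> \<Sigma> \<in> borel_measurable borel"

definition distribution_of_play ::
  "(('i::finite \<Rightarrow> bool) \<Rightarrow> ((real^'i) \<times> 'w::euclidean_space) \<Rightarrow> real^'i \<Rightarrow> real) \<Rightarrow> bool" where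
  "distribution_of_play h \<longleftrightarrow>
     (\<forall>y. (\<lambda>(x, e). h y x e) \<in> borel_measurable borel) \<and>
     (\<forall>y x e. 0 \<le> h y x e \<and> h y x e \<le> 1) \<and>
     (\<forall>x e. (\<Sum>y\<in>UNIV. h y x e) = 1)"

definition cond_exp_play ::
  "(('i::finite \<Rightarrow> bool) \<Rightarrow> ((real^'i) \<times> 'w) \<Rightarrow> real^'i \<Rightarrow> real) \<Rightarrow> ('w \<Rightarrow> real^'i^'i)
     \<Rightarrow> ((real^'i) \<times> 'w) \<Rightarrow> ('i \<Rightarrow> bool) \<Rightarrow> real" where
  "cond_exp_play h \<Sigma> x y = (\<integral>e. h y x e \<partial>mvn (\<Sigma> (snd x)))"

definition index_v :: "('i \<Rightarrow> 'w \<Rightarrow> real) \<Rightarrow> ((real^'i) \<times> 'w) \<Rightarrow> real^'i \<Rightarrow> real^'i" where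
  "index_v \<beta> x e = (\<chi> i. \<beta> i (snd x) * fst x $ i - e $ i)"

text \<open>Kz is a (measurable) regular conditional distribution of z given w under the law Px of x.\<close>
definition cond_dist_z_given_w ::
  "((real^'i) \<times> 'w::euclidean_space) measure \<Rightarrow> ('w \<Rightarrow> (real^'i) measure) \<Rightarrow> bool" where
  "cond_dist_z_given_w Px Kz \<longleftrightarrow>
     Kz \<in> measurable borel (prob_algebra borel) \<and>
     (\<forall>A \<in> sets borel. \<forall>B \<in> sets borel.
        emeasure Px (A \<times> B) =
          (\<integral>\<^sup>+ w. indicator B w * emeasure (Kz w) A \<partial>distr Px borel snd))"

text \<open>Assumption A1 (W is the support of w).\<close>
definition assm_A1 :: "((real^'i) \<times> 'w::euclidean_space) measure \<Rightarrow> ('w \<Rightarrow> (real^'i) measure)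
     \<Rightarrow> ('i \<Rightarrow> 'w \<Rightarrow> real) \<Rightarrow> bool" where
  "assm_A1 Px Kz \<beta> \<longleftrightarrow>
     (\<forall>w \<in> support_of (distr Px borel snd). support_of (Kz w) = UNIV) \<and>
     (\<forall>i. \<forall>w \<in> support_of (distr Px borel snd). \<beta> i w \<noteq> 0)"

text \<open>Assumption A2: e | (z,w) ~ N(0, Sigma(w)) (built into the joint law used below),
  with Sigma(w) symmetric positive definite with unit diagonal.\<close>
definition assm_A2 :: "((real^'i) \<times> 'w::euclidean_space) measure \<Rightarrow> ('w \<Rightarrow> real^'i^'i) \<Rightarrow> bool" where
  "assm_A2 Px \<Sigma> \<longleftrightarrow>
     (\<forall>w \<in> support_of (distr Px borel snd).
        transpose (\<Sigma> w) = \<Sigma> w \<and>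
        (\<forall>v. v \<noteq> 0 \<longrightarrow> v \<bullet> (\<Sigma> w *v v) > 0) \<and>
        (\<forall>i. \<Sigma> w $ i $ i = 1))"

definition assm_A3 :: "((real^'i) \<times> 'w::euclidean_space) measure \<Rightarrow> ('i \<Rightarrow> 'w \<Rightarrow> real)
     \<Rightarrow> ('w \<Rightarrow> real^'i^'i) \<Rightarrow> (('i::finite \<Rightarrow> bool) \<Rightarrow> ((real^'i) \<times> 'w) \<Rightarrow> real^'i \<Rightarrow> real) \<Rightarrow> bool" where
  "assm_A3 Px \<beta> \<Sigma> h \<longleftrightarrow>
     (\<exists>ht :: ('i \<Rightarrow> bool) \<Rightarrow> 'w \<Rightarrow> real^'i \<Rightarrow> real.
        (\<forall>y. (\<lambda>(w, v). ht y w v) \<in> borel_measurable borel) \<and>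
        (AE x in Px. AE e in mvn (\<Sigma> (snd x)).
           \<forall>y. h y x e = ht y (snd x) (index_v \<beta> x e)))"

end

theory Submission
  imports Defs
begin

text \<open>
  Under A3 a choice probability \<open>h(y, x, e)\<close> is almost surely a function \<open>f(w, v)\<close> of \<open>w\<close> and
  the index \<open>v = diag(\<beta>(w)) z - e\<close>, so its conditional expectation given \<open>x\<close> is the Gaussian
  convolution of \<open>f(w, \<cdot>)\<close> with \<open>N(0, \<Sigma>(w))\<close>, evaluated at \<open>diag(\<beta>(w)) z\<close>. Completing the
  square turns this convolution, up to a positive factor, into the two-sided Laplace transform of
  \<open>f(w, v) exp(-v\<^sup>T \<Sigma>(w)\<^sup>-\<^sup>1 v / 2)\<close> at the point \<open>\<Sigma>(w)\<^sup>-\<^sup>1 diag(\<beta>(w)) z\<close>, which is continuous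
  in \<open>z\<close>. Since \<open>z\<close> has full support given \<open>w\<close> and \<open>\<Sigma>(w)\<^sup>-\<^sup>1 diag(\<beta>(w))\<close> is invertible, equal
  conditional expectations force the Laplace transforms of the two (truncated, hence bounded)
  versions to agree everywhere. A function whose Laplace transform is finite and zero everywhere
  vanishes almost everywhere: this is uniqueness of multivariate moment generating functions,
  reduced coordinate by coordinate to dimension one, where the moments determine the
  characteristic function and Levy's uniqueness theorem applies.
\<close>

section \<open>Positive definite matrices\<close>

definition pos_definite :: "real^'n^'n \<Rightarrow> bool" where
  "pos_definite S \<longleftrightarrow> (\<forall>v. v \<noteq> 0 \<longrightarrow> v \<bullet> (S *v v) > 0)"

lemma inner_matrix_vector_symmetric:
  fixes A :: "real^'n^'n"
  assumes "transpose A = A"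
  shows "x \<bullet> (A *v y) = (A *v x) \<bullet> y"
  by (metis assms dot_lmul_matrix transpose_matrix_vector)

lemma pos_definite_invertible:
  assumes "pos_definite S"
  shows "invertible S"
proof -
  have "S *v x = 0 \<Longrightarrow> x = 0" for x
    using assms unfolding pos_definite_def by (metis inner_zero_right less_irrefl)
  then show ?thesis
    using matrix_left_invertible_ker invertible_left_inverse by blast
qed

lemma matrix_inv_right_left:
  fixes S :: "real^'n^'n"
  assumes "invertible S"
  shows matrix_inv_right: "S ** matrix_inv S = mat 1"
    and matrix_inv_left: "matrix_inv S ** S = mat 1"
proof -
  have "S ** matrix_inv S = mat 1 \<and> matrix_inv S ** S = mat 1"
    using assms unfolding invertible_def matrix_inv_def by (rule someI_ex)
  then show "S ** matrix_inv S = mat 1" "matrix_inv S ** S = mat 1" by auto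
qed

lemma transpose_matrix_inv_symmetric:
  fixes S :: "real^'n^'n"
  assumes "invertible S" "transpose S = S"
  shows "transpose (matrix_inv S) = matrix_inv S"
proof -
  let ?A = "matrix_inv S"
  have "transpose ?A ** S = mat 1"
    by (metis assms(2) matrix_inv_right[OF assms(1)] matrix_transpose_mul transpose_mat)
  then show ?thesis
    by (metis matrix_inv_right[OF assms(1)] matrix_mul_assoc matrix_mul_lid matrix_mul_rid)
qed

lemma pos_definite_matrix_inv:
  fixes S :: "real^'n^'n"
  assumes "pos_definite S" "transpose S = S"
  shows "pos_definite (matrix_inv S)"
  unfolding pos_definite_def
proof (intro allI impI)
  fix v :: "real^'n" assume "v \<noteq> 0"
  let ?u = "matrix_inv S *v v"
  have v: "v = S *v ?u"
    using pos_definite_invertible[OF assms(1)]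
    by (simp add: matrix_vector_mul_assoc matrix_inv_right)
  with \<open>v \<noteq> 0\<close> have "?u \<bullet> (S *v ?u) > 0"
    using assms(1) unfolding pos_definite_def by (metis matrix_vector_mult_0_right)
  with v show "v \<bullet> ?u > 0" by (simp add: inner_commute)
qed

lemma pos_definite_quadratic_lower_bound:
  fixes M :: "real^'n^'n"
  assumes "pos_definite M"
  obtains l where "l > 0" "\<And>v. l * norm v ^ 2 \<le> v \<bullet> (M *v v)"
proof -
  let ?S = "sphere (0::real^'n) 1"
  have "continuous_on ?S (\<lambda>v. v \<bullet> (M *v v))"
    by (intro continuous_intros linear_continuous_on matrix_vector_mul_bounded_linear)
  moreover have "axis undefined 1 \<in> ?S" by (simp add: norm_axis_1)
  ultimately obtain x where x: "x \<in> ?S" "\<And>y. y \<in> ?S \<Longrightarrow> x \<bullet> (M *v x) \<le> y \<bullet> (M *v y)"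
    using continuous_attains_inf[OF compact_sphere] by blast
  have "x \<bullet> (M *v x) > 0"
    using x(1) assms unfolding pos_definite_def by (metis norm_zero zero_neq_one mem_sphere_0)
  moreover have "x \<bullet> (M *v x) * norm v ^ 2 \<le> v \<bullet> (M *v v)" for v
  proof (cases "v = 0")
    case False
    then have "x \<bullet> (M *v x) \<le> (v /\<^sub>R norm v) \<bullet> (M *v (v /\<^sub>R norm v))"
      by (intro x(2)) simp
    also have "\<dots> = (v \<bullet> (M *v v)) / norm v ^ 2"
      by (simp add: matrix_vector_mult_scaleR power2_eq_square divide_inverse)
    finally show ?thesis using False by (simp add: field_simps)
  qed simp
  ultimately show ?thesis by (rule that)
qed

lemma pos_definite_det_pos:
  fixes S :: "real^'n^'n"
  assumes "pos_definite S"
  shows "det S > 0"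
proof (rule ccontr)
  assume "\<not> det S > 0"
  define M where "M t = (1 - t) *\<^sub>R mat 1 + t *\<^sub>R S" for t :: real
  \<comment> \<open>the determinant along the segment from the identity to \<open>S\<close> would have to vanish\<close>
  have "continuous_on {0..1} (\<lambda>t. det (M t))"
    unfolding M_def det_def by (intro continuous_intros)
  then obtain t where t: "0 \<le> t" "t \<le> 1" "det (M t) = 0"
    using IVT2'[of "\<lambda>t. det (M t)" 1 0 0] \<open>\<not> det S > 0\<close> by (auto simp: M_def)
  have "pos_definite (M t)"
    unfolding pos_definite_def
  proof (intro allI impI)
    fix v :: "real^'n" assume "v \<noteq> 0"
    then have "v \<bullet> v > 0" "v \<bullet> (S *v v) > 0"
      using assms unfolding pos_definite_def by auto
    moreover have "v \<bullet> (M t *v v) = (1 - t) * (v \<bullet> v) + t * (v \<bullet> (S *v v))"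
      by (simp add: M_def scaleR_matrix_vector_assoc[symmetric] matrix_vector_mult_add_rdistrib inner_add_right
          matrix_vector_mul_lid)
    ultimately show "v \<bullet> (M t *v v) > 0"
      using t by (cases "t = 0") (auto intro: add_nonneg_pos add_pos_nonneg)
  qed
  then show False
    using t(3) pos_definite_invertible invertible_det_nz by blast
qed

lemma diagonal_matrix_vector_mult:
  "(\<chi> i j. if i = j then b i else 0) *v z = (\<chi> i. b i * z $ i)"
proof -
  have "(\<Sum>j\<in>UNIV. (if i = j then b i else 0) * z $ j) = b i * z $ i" for i
    by (simp add: if_distrib[of "\<lambda>c. c * _"] sum.delta cong: if_cong)
  then show ?thesis by (simp add: vec_eq_iff matrix_vector_mult_def)
qed

lemma quadratic_form_measurable [measurable]:
  fixes A :: "real^'n^'n"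
  shows "(\<lambda>v. v \<bullet> (A *v v)) \<in> borel_measurable borel"
  by (intro borel_measurable_continuous_onI continuous_intros linear_continuous_on
      matrix_vector_mul_bounded_linear)

section \<open>Gaussian integrals\<close>

lemma integrable_exp_neg_norm_sq:
  fixes c :: real
  assumes "c > 0"
  shows "integrable lborel (\<lambda>v::'a::euclidean_space. exp (- c * norm v ^ 2))"
proof -
  have "integrable lborel (\<lambda>x::real. exp (- c * x^2))"
  proof -
    have "integrable lborel (\<lambda>x. sqrt (2 * pi) / sqrt (2 * c) * normal_density 0 (1 / sqrt (2 * c)) x)"
      using assms by (intro integrable_mult_right integrable_normal_density) auto
    also have "(\<lambda>x. sqrt (2 * pi) / sqrt (2 * c) * normal_density 0 (1 / sqrt (2 * c)) x) =
        (\<lambda>x. exp (- c * x^2))"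
      using assms by (auto simp: normal_density_def fun_eq_iff power_divide real_sqrt_mult[symmetric])
    finally show ?thesis .
  qed
  then have finite_1d: "(\<integral>\<^sup>+x. ennreal (exp (- c * x^2)) \<partial>lborel) < \<infinity>"
    by (simp add: integrable_iff_bounded)
  have "ennreal (exp (- c * norm v ^ 2)) = (\<Prod>b\<in>Basis. ennreal (exp (- c * (v \<bullet> b)^2)))" for v :: 'a
  proof -
    have "norm v ^ 2 = (\<Sum>b\<in>Basis. (v \<bullet> b)^2)"
      using euclidean_inner[of v v] dot_square_norm[of v] by (simp add: power2_eq_square)
    then show ?thesis
      by (simp add: sum_distrib_left exp_sum[symmetric] prod_ennreal)
  qed
  then have "(\<integral>\<^sup>+v. ennreal (exp (- c * norm (v::'a) ^ 2)) \<partial>lborel) =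
      (\<Prod>b\<in>(Basis::'a set). \<integral>\<^sup>+x. ennreal (exp (- c * x^2)) \<partial>lborel)"
    by (simp only:) (rule nn_integral_lborel_prod; simp)
  also have "\<dots> < \<infinity>"
    using finite_1d by (simp add: power_less_top_ennreal)
  finally show ?thesis
    by (intro integrableI_bounded) auto
qed

lemma integrable_exp_neg_norm_sq_plus_linear:
  fixes c R :: real
  assumes "c > 0"
  shows "integrable lborel (\<lambda>v::'a::euclidean_space. exp (- c * norm v ^ 2 + R * norm v))"
proof (rule Bochner_Integration.integrable_bound)
  show "integrable lborel (\<lambda>v::'a. exp (R^2 / (2*c)) * exp (- (c/2) * norm v ^ 2))"
    using integrable_exp_neg_norm_sq[of "c/2"] assms by simp
  have "- c * r ^ 2 + R * r \<le> R^2 / (2*c) + (- (c/2) * r ^ 2)" for r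
  proof -
    have "0 \<le> (c * r - R)^2 / (2 * c)" using assms by simp
    then show ?thesis using assms by (simp add: field_simps power2_eq_square)
  qed
  then show "AE v in lborel. norm (exp (- c * norm (v::'a) ^ 2 + R * norm v)) \<le>
      norm (exp (R^2 / (2*c)) * exp (- (c/2) * norm v ^ 2))"
    by (intro AE_I2) (simp add: exp_add[symmetric])
qed measurable

lemma sets_mvn [measurable_cong]: "sets (mvn S) = sets borel"
  unfolding mvn_def by simp

lemma space_mvn: "space (mvn S) = UNIV"
  unfolding mvn_def by simp

lemma mvn_density_measurable [measurable]:
  fixes S :: "real^'n^'n"
  shows "mvn_density S \<in> borel_measurable borel"
  unfolding mvn_density_def[abs_def] by measurable

lemma finite_measure_mvn:
  fixes S :: "real^'n^'n"
  assumes "pos_definite S" "transpose S = S"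
  shows "finite_measure (mvn S)"
proof -
  obtain l where l: "l > 0" "\<And>v. l * norm v ^ 2 \<le> v \<bullet> (matrix_inv S *v v)"
    using pos_definite_quadratic_lower_bound[OF pos_definite_matrix_inv[OF assms]] by blast
  define k where "k = sqrt ((2 * pi) ^ CARD('n) * det S)"
  have "k > 0"
    using pos_definite_det_pos[OF assms(1)] by (simp add: k_def)
  have "mvn_density S e \<le> exp (- (l/2) * norm e ^ 2) / k" for e
    unfolding mvn_density_def k_def[symmetric] using \<open>k > 0\<close> l(2)[of e]
    by (intro divide_right_mono) auto
  then have "(\<integral>\<^sup>+e. ennreal (mvn_density S e) \<partial>lborel) \<le>
      (\<integral>\<^sup>+e. ennreal (exp (- (l/2) * norm (e::real^'n) ^ 2) / k) \<partial>lborel)"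
    by (intro nn_integral_mono ennreal_leI)
  also have "\<dots> < \<infinity>"
    using integrable_divide_zero[OF integrable_exp_neg_norm_sq[of "l/2", where 'a="real^'n"], of k] l(1)
      \<open>k > 0\<close> by (simp add: integrable_iff_bounded)
  finally have "emeasure (mvn S) UNIV < \<infinity>"
    unfolding mvn_def by (simp add: emeasure_density)
  then show ?thesis
    by (intro finite_measureI) (simp add: space_mvn)
qed

lemma distr_lborel_reflect: "distr lborel borel (\<lambda>e. u - e) = (lborel :: (real^'n) measure)"
  using lborel_affine[of "-1::real" u] by (simp add: density_1)

lemma AE_mvn_reflect:
  assumes "AE v in lborel. P v"
  shows "AE e in mvn S. P (u - e)"
proof -
  have "AE v in distr lborel borel (\<lambda>e. u - e). P v"
    by (subst distr_lborel_reflect) (rule assms)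
  then have "AE e in lborel. P (u - e)"
    by (rule AE_distrD[rotated]) simp
  then show ?thesis
    unfolding mvn_def by (subst AE_density) (auto elim: AE_mp)
qed

lemma gaussian_damped_exp_le:
  fixes A :: "real^'n^'n"
  assumes "l * norm v ^ 2 \<le> v \<bullet> (A *v v)" "\<bar>D v\<bar> \<le> B" "norm t \<le> R"
  shows "\<bar>D v * exp (- (v \<bullet> (A *v v)) / 2) * exp (t \<bullet> v)\<bar> \<le> B * exp (- (l/2) * norm v ^ 2 + R * norm v)"
proof -
  have "t \<bullet> v \<le> R * norm v"
    using norm_cauchy_schwarz[of t v] assms(3) by (meson mult_right_mono norm_ge_zero order_trans)
  then have "exp (- (v \<bullet> (A *v v)) / 2) * exp (t \<bullet> v) \<le> exp (- (l/2) * norm v ^ 2 + R * norm v)"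
    using assms(1) by (simp add: exp_add[symmetric])
  then show ?thesis
    using assms(2) by (simp add: abs_mult mult.assoc mult_mono)
qed

lemma integrable_gaussian_damped_exp:
  fixes A :: "real^'n^'n"
  assumes "pos_definite A" "D \<in> borel_measurable borel" "\<And>v. \<bar>D v\<bar> \<le> B"
  shows "integrable lborel (\<lambda>v. D v * exp (- (v \<bullet> (A *v v)) / 2) * exp (t \<bullet> v))"
proof -
  obtain l where l: "l > 0" "\<And>v. l * norm v ^ 2 \<le> v \<bullet> (A *v v)"
    using pos_definite_quadratic_lower_bound[OF assms(1)] by blast
  show ?thesis
  proof (rule Bochner_Integration.integrable_bound)
    show "integrable lborel (\<lambda>v::real^'n. B * exp (- (l/2) * norm v ^ 2 + norm t * norm v))"
      using l(1) by (intro integrable_mult_right integrable_exp_neg_norm_sq_plus_linear) simp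
    show "AE v in lborel. norm (D v * exp (- (v \<bullet> (A *v v)) / 2) * exp (t \<bullet> v)) \<le>
        norm (B * exp (- (l/2) * norm v ^ 2 + norm t * norm v))"
    proof (rule AE_I2)
      fix v :: "real^'n"
      have "0 \<le> B"
        using assms(3) abs_ge_zero order_trans by blast
      moreover have "\<bar>D v * exp (- (v \<bullet> (A *v v)) / 2) * exp (t \<bullet> v)\<bar> \<le>
          B * exp (- (l/2) * norm v ^ 2 + norm t * norm v)"
        by (rule gaussian_damped_exp_le[OF l(2) assms(3)]) simp
      ultimately show "norm (D v * exp (- (v \<bullet> (A *v v)) / 2) * exp (t \<bullet> v)) \<le>
          norm (B * exp (- (l/2) * norm v ^ 2 + norm t * norm v))"
        by simp
    qed
  qed (use assms(2) in measurable)
qed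

lemma continuous_on_laplace_gaussian_damped:
  fixes A :: "real^'n^'n"
  assumes "pos_definite A" "D \<in> borel_measurable borel" "\<And>v. \<bar>D v\<bar> \<le> B"
  shows "continuous_on UNIV (\<lambda>t. \<integral>v. D v * exp (- (v \<bullet> (A *v v)) / 2) * exp (t \<bullet> v) \<partial>lborel)"
proof -
  obtain l where l: "l > 0" "\<And>v. l * norm v ^ 2 \<le> v \<bullet> (A *v v)"
    using pos_definite_quadratic_lower_bound[OF assms(1)] by blast
  have [measurable]: "D \<in> borel_measurable borel"
    by (rule assms(2))
  have "continuous (at t0) (\<lambda>t. \<integral>v. D v * exp (- (v \<bullet> (A *v v)) / 2) * exp (t \<bullet> v) \<partial>lborel)" for t0
  proof (rule continuous_at_sequentiallyI)
    fix u assume u: "u \<longlonglongrightarrow> t0"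
    then obtain R where R: "\<And>n. norm (u n) \<le> R"
      using convergent_imp_Bseq[OF convergentI[OF u]] unfolding Bseq_def by blast
    show "(\<lambda>n. \<integral>v. D v * exp (- (v \<bullet> (A *v v)) / 2) * exp (u n \<bullet> v) \<partial>lborel) \<longlonglongrightarrow>
        (\<integral>v. D v * exp (- (v \<bullet> (A *v v)) / 2) * exp (t0 \<bullet> v) \<partial>lborel)"
    proof (rule integral_dominated_convergence[where w="\<lambda>v. B * exp (- (l/2) * norm v ^ 2 + R * norm v)"])
      show "integrable lborel (\<lambda>v::real^'n. B * exp (- (l/2) * norm v ^ 2 + R * norm v))"
        using l(1) by (intro integrable_mult_right integrable_exp_neg_norm_sq_plus_linear) simp
      show "AE v in lborel. (\<lambda>n. D v * exp (- (v \<bullet> (A *v v)) / 2) * exp (u n \<bullet> v)) \<longlonglongrightarrow>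
          D v * exp (- (v \<bullet> (A *v v)) / 2) * exp (t0 \<bullet> v)"
        using u by (intro AE_I2 tendsto_intros)
      show "AE v in lborel. norm (D v * exp (- (v \<bullet> (A *v v)) / 2) * exp (u n \<bullet> v)) \<le>
          B * exp (- (l/2) * norm v ^ 2 + R * norm v)" for n
        using gaussian_damped_exp_le[OF l(2) assms(3) R] by (intro AE_I2) simp
    qed simp_all
  qed
  then show ?thesis
    by (intro continuous_at_imp_continuous_on) auto
qed

lemma integral_mvn_shift:
  fixes S :: "real^'n^'n"
  assumes "pos_definite S" "transpose S = S" "D \<in> borel_measurable borel"
  defines "A \<equiv> matrix_inv S"
  shows "(\<integral>e. D (u - e) \<partial>mvn S) = exp (- (u \<bullet> (A *v u)) / 2) / sqrt ((2 * pi) ^ CARD('n) * det S) *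
    (\<integral>v. D v * exp (- (v \<bullet> (A *v v)) / 2) * exp ((A *v u) \<bullet> v) \<partial>lborel)"
proof -
  have A_symmetric: "transpose A = A"
    unfolding A_def using assms(1,2) pos_definite_invertible transpose_matrix_inv_symmetric by blast
  have "0 < sqrt ((2 * pi) ^ CARD('n) * det S)"
    using pos_definite_det_pos[OF assms(1)] by simp
  then have density_nonneg: "0 \<le> mvn_density S e" for e
    by (simp add: mvn_density_def)
  have [measurable]: "(\<lambda>e. D (u - e)) \<in> borel_measurable borel"
    using assms(3) by measurable
  have "(\<integral>e. D (u - e) \<partial>mvn S) = (\<integral>e. mvn_density S e * D (u - e) \<partial>lborel)"
    unfolding mvn_def using density_nonneg by (subst integral_density) auto
  also have "\<dots> = (\<integral>e. mvn_density S e * D (u - e) \<partial>distr lborel borel (\<lambda>e. u - e))"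
    by (simp add: distr_lborel_reflect)
  also have "\<dots> = (\<integral>v. mvn_density S (u - v) * D v \<partial>lborel)"
    by (subst integral_distr) auto
  \<comment> \<open>complete the square in the exponent\<close>
  also have "\<dots> = (\<integral>v. exp (- (u \<bullet> (A *v u)) / 2) / sqrt ((2 * pi) ^ CARD('n) * det S) *
      (D v * exp (- (v \<bullet> (A *v v)) / 2) * exp ((A *v u) \<bullet> v)) \<partial>lborel)"
  proof (rule Bochner_Integration.integral_cong[OF refl])
    fix v
    have "(u - v) \<bullet> (A *v (u - v)) = u \<bullet> (A *v u) - 2 * ((A *v u) \<bullet> v) + v \<bullet> (A *v v)"
      using inner_matrix_vector_symmetric[OF A_symmetric, of u v] inner_commute[of v "A *v u"]
      by (simp add: matrix_vector_mult_diff_distrib inner_diff_left inner_diff_right)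
    then show "mvn_density S (u - v) * D v = exp (- (u \<bullet> (A *v u)) / 2) / sqrt ((2 * pi) ^ CARD('n) * det S) *
        (D v * exp (- (v \<bullet> (A *v v)) / 2) * exp ((A *v u) \<bullet> v))"
      by (simp add: mvn_density_def A_def[symmetric] exp_add[symmetric] exp_diff field_simps)
  qed
  finally show ?thesis
    by simp
qed

section \<open>Uniqueness of moment generating functions\<close>

lemma powser_coeffs_eq_0:
  fixes c :: "nat \<Rightarrow> real"
  assumes "\<And>s. (\<lambda>k. c k * s^k) sums 0"
  shows "c k = 0"
proof (induction k rule: less_induct)
  case (less k)
  have "(\<lambda>j. c (j + k) * s^j) sums 0" if "s \<noteq> 0" for s
  proof -
    have "(\<lambda>j. c (j + k) * s^(j + k)) sums 0"
      using sums_split_initial_segment[OF assms[of s], of k] less by simp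
    then have "(\<lambda>j. c (j + k) * s^(j + k) / s^k) sums 0"
      using sums_divide by fastforce
    then show ?thesis
      using that by (simp add: power_add)
  qed
  then have "((\<lambda>_. 0) \<longlongrightarrow> c k) (at (0::real))"
    using powser_limit_0_strong[of 1 "\<lambda>j. c (j + k)" "\<lambda>_. 0"] by simp
  then show ?case
    using tendsto_const tendsto_unique trivial_limit_at by blast
qed

lemma sum_power_div_fact_le_exp:
  fixes y :: real
  assumes "0 \<le> y" "finite I"
  shows "(\<Sum>k\<in>I. y^k / fact k) \<le> exp y"
proof -
  have exp_sums: "(\<lambda>k. y^k / fact k) sums exp y"
    using exp_converges[of y] by (simp add: divide_inverse mult.commute)
  have "(\<Sum>k\<in>I. y^k / fact k) \<le> (\<Sum>k. y^k / fact k)"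
    using assms by (intro sum_le_suminf sums_summable[OF exp_sums]) auto
  then show ?thesis
    using sums_unique[OF exp_sums] by simp
qed

lemma abs_power_le_fact_exp:
  fixes x :: real
  shows "\<bar>x\<bar>^k \<le> fact k * (exp x + exp (- x))"
proof -
  have "\<bar>x\<bar>^k / fact k \<le> exp \<bar>x\<bar>"
    using sum_power_div_fact_le_exp[of "\<bar>x\<bar>" "{k}"] by simp
  then have "\<bar>x\<bar>^k \<le> fact k * exp \<bar>x\<bar>"
    by (simp add: field_simps)
  also have "\<dots> \<le> fact k * (exp x + exp (- x))"
    by (intro mult_left_mono) (simp_all add: abs_if add_increasing add_increasing2)
  finally show ?thesis .
qed

locale finite_mgf =
  fixes M :: "real measure"
  assumes sets_eq: "sets M = sets borel"
    and mgf_finite: "\<And>s. (\<integral>\<^sup>+x. ennreal (exp (s * x)) \<partial>M) < \<infinity>"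
begin

lemma integrable_exp: "integrable M (\<lambda>x. exp (s * x))"
  using mgf_finite[of s] by (simp add: integrable_iff_bounded measurable_cong_sets[OF sets_eq refl])

lemma integrable_power: "integrable M (\<lambda>x. x^k)"
proof (rule Bochner_Integration.integrable_bound)
  show "integrable M (\<lambda>x. fact k * (exp x + exp (- x)))"
    using integrable_exp[of 1] integrable_exp[of "-1"] by auto
  show "AE x in M. norm (x^k) \<le> norm (fact k * (exp x + exp (- x)))"
    using abs_power_le_fact_exp[of _ k] by (intro AE_I2) (simp add: power_abs)
qed (simp add: measurable_cong_sets[OF sets_eq refl])

lemma summable_integral_exp_series:
  fixes t :: real
  shows "summable (\<lambda>k. \<integral>x. \<bar>t * x\<bar>^k / fact k \<partial>M)"
proof (rule bounded_imp_summable)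
  have int: "integrable M (\<lambda>x. \<bar>t * x\<bar>^k / fact k)" for k
    using integrable_abs[OF integrable_power[of k]]
    by (simp add: abs_mult power_mult_distrib power_abs)
  show "0 \<le> (\<integral>x. \<bar>t * x\<bar>^k / fact k \<partial>M)" for k
    by (intro integral_nonneg_AE) auto
  fix n
  have "(\<Sum>k\<le>n. \<integral>x. \<bar>t * x\<bar>^k / fact k \<partial>M) = (\<integral>x. (\<Sum>k\<le>n. \<bar>t * x\<bar>^k / fact k) \<partial>M)"
    using int by (subst Bochner_Integration.integral_sum) auto
  also have "\<dots> \<le> (\<integral>x. exp (t * x) + exp (- t * x) \<partial>M)"
  proof (rule integral_mono)
    fix x
    have "(\<Sum>k\<le>n. \<bar>t * x\<bar> ^ k / fact k) \<le> exp \<bar>t * x\<bar>"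
      by (rule sum_power_div_fact_le_exp) simp_all
    also have "\<dots> \<le> exp (t * x) + exp (- t * x)"
      by (cases "0 \<le> t * x") auto
    finally show "(\<Sum>k\<le>n. \<bar>t * x\<bar> ^ k / fact k) \<le> exp (t * x) + exp (- t * x)" .
  qed (use int integrable_exp[of t] integrable_exp[of "- t"] in auto)
  finally show "(\<Sum>k\<le>n. \<integral>x. \<bar>t * x\<bar>^k / fact k \<partial>M) \<le> (\<integral>x. exp (t * x) + exp (- t * x) \<partial>M)" .
qed

lemma mgf_moment_sums: "(\<lambda>k. s^k / fact k * (\<integral>x. x^k \<partial>M)) sums (\<integral>x. exp (s * x) \<partial>M)"
proof -
  let ?f = "\<lambda>k x. (s * x)^k /\<^sub>R fact k"
  have "(\<lambda>k. integral\<^sup>L M (?f k)) sums (\<integral>x. (\<Sum>k. ?f k x) \<partial>M)"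
  proof (rule sums_integral)
    show "integrable M (?f k)" for k
      using integrable_power[of k] by (simp add: power_mult_distrib)
    show "AE x in M. summable (\<lambda>k. norm (?f k x))"
      by (intro AE_I2 summable_norm_exp)
    have "(\<lambda>k. \<integral>x. norm (?f k x) \<partial>M) = (\<lambda>k. \<integral>x. \<bar>s * x\<bar>^k / fact k \<partial>M)"
      by (simp add: abs_mult power_abs power_mult_distrib field_simps)
    then show "summable (\<lambda>k. \<integral>x. norm (?f k x) \<partial>M)"
      using summable_integral_exp_series[of s] by simp
  qed
  moreover have "(\<lambda>x. (\<Sum>k. ?f k x)) = (\<lambda>x. exp (s * x))"
    by (simp add: exp_def)
  moreover have "integral\<^sup>L M (?f k) = s^k / fact k * (\<integral>x. x^k \<partial>M)" for k
    by (simp add: power_mult_distrib divide_inverse mult.commute mult.left_commute)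
  ultimately show ?thesis by simp
qed

lemma char_moment_sums:
  "(\<lambda>k. ((\<i> * complex_of_real t)^k /\<^sub>R fact k) * complex_of_real (\<integral>x. x^k \<partial>M)) sums char M t"
proof -
  let ?f = "\<lambda>k x. (\<i> * complex_of_real (t * x))^k /\<^sub>R fact k"
  have f_eq: "?f k = (\<lambda>x. ((\<i> * complex_of_real t)^k /\<^sub>R fact k) * complex_of_real (x^k))" for k
    by (auto simp: fun_eq_iff power_mult_distrib scaleR_conv_of_real)
  have "(\<lambda>k. integral\<^sup>L M (?f k)) sums (\<integral>x. (\<Sum>k. ?f k x) \<partial>M)"
  proof (rule sums_integral)
    show "integrable M (?f k)" for k
      unfolding f_eq using integrable_power[of k] by (intro integrable_mult_right integrable_of_real)
    show "AE x in M. summable (\<lambda>k. norm (?f k x))"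
      by (intro AE_I2 summable_norm_exp)
    have "(\<lambda>k. \<integral>x. norm (?f k x) \<partial>M) = (\<lambda>k. \<integral>x. \<bar>t * x\<bar>^k / fact k \<partial>M)"
      by (simp add: norm_power norm_mult abs_mult power_abs power_mult_distrib field_simps)
    then show "summable (\<lambda>k. \<integral>x. norm (?f k x) \<partial>M)"
      using summable_integral_exp_series[of t] by simp
  qed
  moreover have "(\<lambda>x. (\<Sum>k. ?f k x)) = (\<lambda>x. iexp (t * x))"
    by (simp add: exp_def)
  moreover have "integral\<^sup>L M (?f k) =
      ((\<i> * complex_of_real t)^k /\<^sub>R fact k) * complex_of_real (\<integral>x. x^k \<partial>M)" for k
    unfolding f_eq by (subst integral_mult_right_zero) (subst integral_complex_of_real, rule refl)
  ultimately show ?thesis by (simp add: char_def)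
qed

end

lemma real_distribution_density_inverse_mass:
  fixes L :: "real measure"
  assumes "sets L = sets borel" "emeasure L (space L) = ennreal c" "c > 0"
  shows "real_distribution (density L (\<lambda>_. ennreal (1 / c)))"
proof -
  have "prob_space (density L (\<lambda>_. ennreal (1 / c)))"
    using assms(2,3)
    by (intro prob_spaceI) (simp add: emeasure_density ennreal_mult'[symmetric] nn_integral_cmult)
  then show ?thesis
    using assms(1) by (auto simp: real_distribution_def real_distribution_axioms_def)
qed

lemma char_density_const:
  fixes L :: "real measure"
  assumes "sets L = sets borel" "c \<ge> 0"
  shows "char (density L (\<lambda>_. ennreal c)) t = c *\<^sub>R char L t"
proof -
  have "(\<lambda>x. iexp (t * x)) \<in> borel_measurable L"
    by (subst measurable_cong_sets[OF assms(1) refl]) measurable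
  then show ?thesis
    unfolding char_def using assms(2) by (subst integral_density) auto
qed

lemma finite_measure_eq_if_char_eq:
  fixes M N :: "real measure"
  assumes sets_M: "sets M = sets borel" and sets_N: "sets N = sets borel"
    and "finite_measure M" "finite_measure N"
    and char_eq: "char M = char N"
  shows "M = N"
proof -
  have char_0: "char L 0 = complex_of_real (measure L (space L))" for L :: "real measure"
    by (simp add: char_def scaleR_conv_of_real)
  define c where "c = measure M (space M)"
  have "measure N (space N) = c"
    using char_0[of M] char_0[of N] char_eq by (simp add: c_def)
  then have mass: "emeasure L (space L) = ennreal c" if "L \<in> {M, N}" for L
    using that \<open>finite_measure M\<close> \<open>finite_measure N\<close>
    by (auto simp: c_def finite_measure.emeasure_eq_measure)
  show ?thesis
  proof (cases "c = 0")
    case True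
    then have "emeasure L A = 0" if "L \<in> {M, N}" for L A
      using emeasure_space[of L A] mass[OF that] by simp
    then show ?thesis
      using sets_M sets_N by (intro measure_eqI) auto
  next
    case False
    then have "c > 0" by (simp add: c_def order_le_neq_trans)
    let ?normalize = "\<lambda>L. density L (\<lambda>_. ennreal (1 / c))"
    have "?normalize M = ?normalize N"
      using sets_M sets_N char_eq mass \<open>c > 0\<close>
      by (intro Levy_uniqueness real_distribution_density_inverse_mass) (auto simp: char_density_const)
    moreover have "density (?normalize L) (\<lambda>_. ennreal c) = L" for L
      using \<open>c > 0\<close> by (subst density_density_eq) (auto simp: ennreal_mult'[symmetric] density_1)
    ultimately show ?thesis by metis
  qed
qed

lemma measure_eqI_mgf:
  fixes M N :: "real measure"
  assumes "sets M = sets borel" "sets N = sets borel"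
    and mgf_finite: "\<And>s. (\<integral>\<^sup>+x. ennreal (exp (s * x)) \<partial>M) < \<infinity>"
    and mgf_eq: "\<And>s. (\<integral>\<^sup>+x. ennreal (exp (s * x)) \<partial>M) = (\<integral>\<^sup>+x. ennreal (exp (s * x)) \<partial>N)"
  shows "M = N"
proof -
  interpret M: finite_mgf M
    using assms(1) mgf_finite by unfold_locales
  interpret N: finite_mgf N
    using assms(2) mgf_finite by unfold_locales (simp_all flip: mgf_eq)
  have "ennreal (\<integral>x. exp (s * x) \<partial>M) = ennreal (\<integral>x. exp (s * x) \<partial>N)" for s
    using mgf_eq[of s] M.integrable_exp[of s] N.integrable_exp[of s]
    by (simp add: nn_integral_eq_integral[symmetric])
  then have mgf_eq': "(\<integral>x. exp (s * x) \<partial>M) = (\<integral>x. exp (s * x) \<partial>N)" for s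
    by (simp add: integral_nonneg_AE)
  \<comment> \<open>the moment generating functions are power series whose coefficients are the moments\<close>
  have "(\<lambda>k. s^k / fact k * (\<integral>x. x^k \<partial>M) - s^k / fact k * (\<integral>x. x^k \<partial>N)) sums 0" for s
    using sums_diff[OF M.mgf_moment_sums N.mgf_moment_sums, of s s] by (simp only: mgf_eq' diff_self)
  then have "(\<lambda>k. ((\<integral>x. x^k \<partial>M) - (\<integral>x. x^k \<partial>N)) / fact k * s^k) sums 0" for s
    by (simp add: field_simps)
  then have moments_eq: "(\<integral>x. x^k \<partial>M) = (\<integral>x. x^k \<partial>N)" for k
    using powser_coeffs_eq_0[of "\<lambda>k. ((\<integral>x. x^k \<partial>M) - (\<integral>x. x^k \<partial>N)) / fact k"] by simp
  have "char M = char N"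
  proof
    fix t
    show "char M t = char N t"
      using M.char_moment_sums[of t] N.char_moment_sums[of t] unfolding moments_eq by (rule sums_unique2)
  qed
  moreover have "finite_measure L" if "finite_mgf L" for L
    using finite_mgf.mgf_finite[OF that, of 0] by (intro finite_measureI) (simp add: less_top)
  ultimately show ?thesis
    using assms M.finite_mgf_axioms N.finite_mgf_axioms by (intro finite_measure_eq_if_char_eq) auto
qed

text \<open>
  For \<open>S = {}\<close> this is the integrand of the moment generating function, for \<open>S = UNIV\<close> and
  \<open>t = 0\<close> the indicator of a coordinate box; induction over \<open>S\<close> passes between the two using
  only the one-dimensional uniqueness theorem.
\<close>
definition indicator_exp_weight :: "'n set \<Rightarrow> ('n \<Rightarrow> real set) \<Rightarrow> ('n \<Rightarrow> real) \<Rightarrow> real^'n \<Rightarrow> real" where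
  "indicator_exp_weight S A t v = (\<Prod>i\<in>S. indicator (A i) (v$i)) * exp (\<Sum>i\<in>-S. t i * v$i)"

lemma indicator_exp_weight_measurable:
  fixes A :: "'n::finite \<Rightarrow> real set"
  assumes "\<forall>i\<in>S. A i \<in> sets borel"
  shows "indicator_exp_weight S A t \<in> (borel_measurable borel :: (real^'n \<Rightarrow> real) set)"
proof -
  have [measurable]: "(\<lambda>v::real^'n. indicator (A i) (v$i) :: real) \<in> borel_measurable borel" if "i \<in> S" for i
    using that assms by measurable
  show ?thesis
    unfolding indicator_exp_weight_def[abs_def] by measurable
qed

lemma indicator_exp_weight_nonneg: "0 \<le> indicator_exp_weight S A t v"
  unfolding indicator_exp_weight_def by (intro mult_nonneg_nonneg prod_nonneg) auto

lemma indicator_exp_weight_le_exp: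
  "indicator_exp_weight S A t v \<le> exp ((\<chi> i. if i \<in> S then 0 else t i) \<bullet> v)"
proof -
  have "(\<chi> i. if i \<in> S then 0 else t i) \<bullet> v = (\<Sum>i\<in>-S. t i * v$i)"
    by (simp add: inner_vec_def if_distrib[of "\<lambda>c. c * _"] sum.If_cases Compl_eq)
  moreover have "(\<Prod>i\<in>S. indicator (A i) (v$i) :: real) \<le> 1"
    by (intro prod_le_1) (auto simp: indicator_def)
  ultimately show ?thesis
    unfolding indicator_exp_weight_def by (simp add: mult_left_le_one_le prod_nonneg)
qed

lemma indicator_exp_weight_empty: "indicator_exp_weight {} A t v = exp ((\<chi> i. t i) \<bullet> v)"
  by (simp add: indicator_exp_weight_def inner_vec_def)

lemma indicator_exp_weight_UNIV:
  "indicator_exp_weight UNIV A t v = indicator {v. \<forall>i. v$i \<in> A i} v"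
  by (simp add: indicator_exp_weight_def indicator_def)

lemma indicator_exp_weight_insert:
  assumes "j \<notin> S" "finite S"
  shows "indicator_exp_weight (insert j S) A t v =
    indicator (A j) (v$j) * indicator_exp_weight S A (t(j := 0)) v"
proof -
  have "-S = insert j (-insert j S)" using assms by auto
  then have "(\<Sum>i\<in>-S. (t(j := 0)) i * v$i) = (\<Sum>i\<in>-insert j S. t i * v$i)"
    by (simp add: sum.insert_if)
  then show ?thesis
    unfolding indicator_exp_weight_def using assms by simp
qed

lemma indicator_exp_weight_update:
  assumes "j \<notin> S"
  shows "indicator_exp_weight S A (t(j := s)) v = exp (s * v$j) * indicator_exp_weight S A (t(j := 0)) v"
proof -
  have "-S = insert j (-insert j S)" using assms by auto
  then have "(\<Sum>i\<in>-S. (t(j := s)) i * v$i) = s * v$j + (\<Sum>i\<in>-insert j S. t i * v$i)"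
       "(\<Sum>i\<in>-S. (t(j := 0)) i * v$i) = (\<Sum>i\<in>-insert j S. t i * v$i)"
    by (simp_all add: sum.insert_if)
  then show ?thesis
    unfolding indicator_exp_weight_def by (simp add: exp_add)
qed

lemma nn_integral_coordinate_marginal:
  fixes L :: "(real^'n) measure"
  assumes "sets L = sets borel" "W \<in> borel_measurable borel" "g \<in> borel_measurable borel"
  shows "(\<integral>\<^sup>+x. g x \<partial>distr (density L W) borel (\<lambda>v. v$j)) = (\<integral>\<^sup>+v. W v * g (v$j) \<partial>L)"
  using assms by (simp add: nn_integral_distr nn_integral_density measurable_cong_sets[OF assms(1) refl])

lemma nn_integral_exp_weighted_marginal:
  fixes L :: "(real^'n) measure"
  assumes "sets L = sets borel" "j \<notin> S" "\<forall>i\<in>S. A i \<in> sets borel"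
  shows "(\<integral>\<^sup>+x. exp (s * x) \<partial>distr (density L (indicator_exp_weight S A (t(j := 0)))) borel (\<lambda>v. v$j)) =
    (\<integral>\<^sup>+v. indicator_exp_weight S A (t(j := s)) v \<partial>L)"
proof -
  have "(\<integral>\<^sup>+x. exp (s * x) \<partial>distr (density L (indicator_exp_weight S A (t(j := 0)))) borel (\<lambda>v. v$j)) =
      (\<integral>\<^sup>+v. indicator_exp_weight S A (t(j := 0)) v * ennreal (exp (s * v$j)) \<partial>L)"
    using assms(1) indicator_exp_weight_measurable[OF assms(3)]
    by (intro nn_integral_coordinate_marginal) auto
  also have "\<dots> = (\<integral>\<^sup>+v. indicator_exp_weight S A (t(j := s)) v \<partial>L)"
    by (subst indicator_exp_weight_update[OF assms(2)])
      (simp add: ennreal_mult indicator_exp_weight_nonneg mult.commute)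
  finally show ?thesis .
qed

lemma nn_integral_indicator_weighted_marginal:
  fixes L :: "(real^'n) measure"
  assumes "sets L = sets borel" "finite S" "j \<notin> S" "\<forall>i\<in>insert j S. A i \<in> sets borel"
  shows "(\<integral>\<^sup>+x. indicator (A j) x \<partial>distr (density L (indicator_exp_weight S A (t(j := 0)))) borel (\<lambda>v. v$j)) =
    (\<integral>\<^sup>+v. indicator_exp_weight (insert j S) A t v \<partial>L)"
proof -
  have "(\<integral>\<^sup>+x. indicator (A j) x \<partial>distr (density L (indicator_exp_weight S A (t(j := 0)))) borel (\<lambda>v. v$j)) =
      (\<integral>\<^sup>+v. ennreal (indicator_exp_weight S A (t(j := 0)) v) * indicator (A j) (v$j) \<partial>L)"
    using assms(1,4) indicator_exp_weight_measurable[of S A]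
    by (intro nn_integral_coordinate_marginal) auto
  also have "\<dots> = (\<integral>\<^sup>+v. indicator_exp_weight (insert j S) A t v \<partial>L)"
    by (subst indicator_exp_weight_insert[OF assms(3,2)])
      (simp add: ennreal_mult indicator_exp_weight_nonneg mult.commute ennreal_indicator)
  finally show ?thesis .
qed

lemma nn_integral_indicator_exp_weight_eq:
  fixes M N :: "(real^'n) measure"
  assumes sets_M: "sets M = sets borel" and sets_N: "sets N = sets borel"
    and mgf_finite: "\<And>t. (\<integral>\<^sup>+v. ennreal (exp (t \<bullet> v)) \<partial>M) < \<infinity>"
    and mgf_eq: "\<And>t. (\<integral>\<^sup>+v. ennreal (exp (t \<bullet> v)) \<partial>M) = (\<integral>\<^sup>+v. ennreal (exp (t \<bullet> v)) \<partial>N)"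
    and "finite S" "\<forall>i\<in>S. A i \<in> sets borel"
  shows "(\<integral>\<^sup>+v. indicator_exp_weight S A t v \<partial>M) = (\<integral>\<^sup>+v. indicator_exp_weight S A t v \<partial>N)"
  using \<open>finite S\<close> \<open>\<forall>i\<in>S. A i \<in> sets borel\<close>
proof (induction S arbitrary: t rule: finite_induct)
  case empty
  then show ?case
    using mgf_eq by (simp add: indicator_exp_weight_empty)
next
  case (insert j S)
  have A_S: "\<forall>i\<in>S. A i \<in> sets borel"
    using insert.prems by simp
  let ?marginal = "\<lambda>L. distr (density L (indicator_exp_weight S A (t(j := 0)))) borel (\<lambda>v. v$j)"
  note mgf_marginal = nn_integral_exp_weighted_marginal[OF _ insert.hyps(2) A_S]
  \<comment> \<open>the \<open>j\<close>-th marginals of the reweighted measures have the same finite MGF by induction\<close>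
  have "?marginal M = ?marginal N"
  proof (rule measure_eqI_mgf)
    fix s
    have "(\<integral>\<^sup>+v. indicator_exp_weight S A (t(j := s)) v \<partial>M) \<le>
        (\<integral>\<^sup>+v. exp ((\<chi> i. if i \<in> S then 0 else (t(j := s)) i) \<bullet> v) \<partial>M)"
      by (intro nn_integral_mono ennreal_leI indicator_exp_weight_le_exp)
    also have "\<dots> < \<infinity>" by (rule mgf_finite)
    finally show "(\<integral>\<^sup>+x. exp (s * x) \<partial>?marginal M) < \<infinity>"
      using mgf_marginal[OF sets_M] by simp
    show "(\<integral>\<^sup>+x. exp (s * x) \<partial>?marginal M) = (\<integral>\<^sup>+x. exp (s * x) \<partial>?marginal N)"
      by (simp only: mgf_marginal[OF sets_M] mgf_marginal[OF sets_N] insert.IH[OF A_S])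
  qed simp_all
  then show ?case
    using nn_integral_indicator_weighted_marginal[OF _ insert.hyps(1,2) insert.prems] sets_M sets_N
    by metis
qed

lemma coordinate_box_borel:
  fixes A :: "'n::finite \<Rightarrow> real set"
  assumes "\<And>i. A i \<in> sets borel"
  shows "{v::real^'n. \<forall>i. v$i \<in> A i} \<in> sets borel"
  using assms by measurable

lemma sets_borel_eq_sigma_coordinate_boxes:
  "sets (borel :: (real^'n) measure) =
    sigma_sets UNIV ((\<lambda>A. {v. \<forall>i. v$i \<in> A i}) ` {A. \<forall>i. A i \<in> sets borel})"
proof -
  have "borel = sigma UNIV ((\<lambda>A. {v::real^'n. \<forall>i. v$i \<in> A i}) ` {A. \<forall>i. A i \<in> sets borel})"
  proof (rule borel_eq_sigmaI1[OF borel_eq_box])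
    fix X assume "X \<in> range (\<lambda>(a, b). box a b :: (real^'n) set)"
    then obtain a b where "X = box a b" by auto
    then have "X = {v. \<forall>i. v$i \<in> {a$i<..<b$i}}"
      by (auto simp: mem_box_cart)
    then have "X \<in> (\<lambda>A. {v. \<forall>i. v$i \<in> A i}) ` {A. \<forall>i. A i \<in> sets borel}"
      by (intro image_eqI[of _ _ "\<lambda>i. {a$i<..<b$i}"]) auto
    then show "X \<in> sets (sigma UNIV ((\<lambda>A. {v. \<forall>i. v$i \<in> A i}) ` {A. \<forall>i. A i \<in> sets borel}))"
      by (simp add: sigma_sets.Basic)
  qed (simp add: coordinate_box_borel)
  then have "sets (borel :: (real^'n) measure) =
      sets (sigma UNIV ((\<lambda>A. {v. \<forall>i. v$i \<in> A i}) ` {A. \<forall>i. A i \<in> sets borel}))"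
    by (rule arg_cong)
  then show ?thesis
    by (subst (asm) sets_measure_of) auto
qed

lemma measure_eqI_mgf_vec:
  fixes M N :: "(real^'n) measure"
  assumes sets_M: "sets M = sets borel" and sets_N: "sets N = sets borel"
    and mgf_finite: "\<And>t. (\<integral>\<^sup>+v. ennreal (exp (t \<bullet> v)) \<partial>M) < \<infinity>"
    and mgf_eq: "\<And>t. (\<integral>\<^sup>+v. ennreal (exp (t \<bullet> v)) \<partial>M) = (\<integral>\<^sup>+v. ennreal (exp (t \<bullet> v)) \<partial>N)"
  shows "M = N"
proof (rule measure_eqI_generator_eq[OF _ _ _ sets_M[unfolded sets_borel_eq_sigma_coordinate_boxes]
      sets_N[unfolded sets_borel_eq_sigma_coordinate_boxes], where A="\<lambda>_. UNIV"])
  let ?box = "\<lambda>A. {v::real^'n. \<forall>i. v$i \<in> A i}"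
  show "Int_stable (?box ` {A. \<forall>i. A i \<in> sets borel})"
  proof (rule Int_stableI_image)
    fix A B :: "'n \<Rightarrow> real set"
    assume "A \<in> {A. \<forall>i. A i \<in> sets borel}" "B \<in> {A. \<forall>i. A i \<in> sets borel}"
    then show "\<exists>C\<in>{A. \<forall>i. A i \<in> sets borel}. ?box A \<inter> ?box B = ?box C"
      by (intro bexI[of _ "\<lambda>i. A i \<inter> B i"]) auto
  qed
  show "emeasure M X = emeasure N X" if X_box: "X \<in> ?box ` {A. \<forall>i. A i \<in> sets borel}" for X
  proof -
    obtain A where X: "X = ?box A" and A: "A \<in> {A. \<forall>i. A i \<in> sets borel}"
      using X_box by (rule imageE)
    have "X \<in> sets borel"
      using A unfolding X by (simp add: coordinate_box_borel)
    then show ?thesis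
      using nn_integral_indicator_exp_weight_eq[OF assms, of UNIV A "\<lambda>_. 0"] A sets_M sets_N
      by (simp add: indicator_exp_weight_UNIV X[symmetric] ennreal_indicator)
  qed
  show "range (\<lambda>_. UNIV) \<subseteq> ?box ` {A. \<forall>i. A i \<in> sets borel}"
    by (auto intro!: image_eqI[of _ _ "\<lambda>_. UNIV"])
  show "emeasure M UNIV \<noteq> \<infinity>"
    using mgf_finite[of 0] sets_eq_imp_space_eq[OF sets_M] by simp
qed auto

lemma AE_zero_if_laplace_transform_zero:
  fixes G :: "real^'n \<Rightarrow> real"
  assumes G_measurable: "G \<in> borel_measurable borel"
    and integrable: "\<And>t. integrable lborel (\<lambda>v. G v * exp (t \<bullet> v))"
    and laplace_zero: "\<And>t. (\<integral>v. G v * exp (t \<bullet> v) \<partial>lborel) = 0"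
  shows "AE v in lborel. G v = 0"
proof -
  let ?pos = "\<lambda>v. max 0 (G v)" and ?neg = "\<lambda>v. max 0 (- G v)"
  have part_integrable: "integrable lborel (\<lambda>v. F v * exp (t \<bullet> v))"
    if "F \<in> borel_measurable borel" "\<And>v. 0 \<le> F v" "\<And>v. F v \<le> \<bar>G v\<bar>" for F t
  proof (rule Bochner_Integration.integrable_bound[OF integrable[of t]])
    show "AE v in lborel. norm (F v * exp (t \<bullet> v)) \<le> norm (G v * exp (t \<bullet> v))"
      using that by (intro AE_I2) (simp add: abs_mult mult_right_mono)
  qed (use that in simp)
  have part_mgf: "(\<integral>\<^sup>+v. exp (t \<bullet> v) \<partial>density lborel F) = ennreal (\<integral>v. F v * exp (t \<bullet> v) \<partial>lborel)"
    if "F \<in> borel_measurable borel" "\<And>v. 0 \<le> F v" "\<And>v. F v \<le> \<bar>G v\<bar>" for F t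
  proof -
    have "(\<integral>\<^sup>+v. exp (t \<bullet> v) \<partial>density lborel F) = (\<integral>\<^sup>+v. ennreal (F v * exp (t \<bullet> v)) \<partial>lborel)"
      using that(1,2) by (simp add: nn_integral_density ennreal_mult)
    also have "\<dots> = ennreal (\<integral>v. F v * exp (t \<bullet> v) \<partial>lborel)"
      using part_integrable[OF that] that(2) by (intro nn_integral_eq_integral) auto
    finally show ?thesis .
  qed
  have "(\<integral>v. ?pos v * exp (t \<bullet> v) \<partial>lborel) = (\<integral>v. ?neg v * exp (t \<bullet> v) \<partial>lborel)" for t
  proof -
    have "(\<integral>v. ?pos v * exp (t \<bullet> v) \<partial>lborel) - (\<integral>v. ?neg v * exp (t \<bullet> v) \<partial>lborel) =
        (\<integral>v. ?pos v * exp (t \<bullet> v) - ?neg v * exp (t \<bullet> v) \<partial>lborel)"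
      using part_integrable[of ?pos t] part_integrable[of ?neg t] G_measurable
      by (intro Bochner_Integration.integral_diff[symmetric]) auto
    also have "\<dots> = (\<integral>v. G v * exp (t \<bullet> v) \<partial>lborel)"
      by (intro Bochner_Integration.integral_cong) (auto simp: max_def algebra_simps)
    finally show ?thesis
      using laplace_zero[of t] by simp
  qed
  then have "density lborel ?pos = density lborel ?neg"
    using part_mgf[of ?pos] part_mgf[of ?neg] G_measurable
    by (intro measure_eqI_mgf_vec) auto
  then have "AE v in lborel. ennreal (?pos v) = ennreal (?neg v)"
    using G_measurable by (subst (asm) sigma_finite_measure.density_unique_iff[OF sigma_finite_lborel]) auto
  then show ?thesis
    by (rule AE_mp) (intro AE_I2, auto simp: max_def split: if_splits)
qed

section \<open>Injectivity of Gaussian convolution\<close>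

lemma zero_if_AE_zero_full_support:
  fixes K :: "'a::topological_space measure" and f :: "'a \<Rightarrow> 'b::t2_space"
  assumes "sets K = sets borel" "support_of K = UNIV" "continuous_on UNIV f" "AE z in K. f z = c"
  shows "f z = c"
proof -
  have "open {z. f z \<noteq> c}"
    using assms(3) by (rule open_Collect_neq[OF _ continuous_on_const])
  moreover have "emeasure K {z. f z \<noteq> c} = 0"
    using assms(4) \<open>open {z. f z \<noteq> c}\<close> assms(1)
    by (subst (asm) AE_iff_measurable[of "{z. f z \<noteq> c}"]) (auto simp: sets_eq_imp_space_eq[OF assms(1)])
  ultimately show ?thesis
    using assms(2) unfolding support_of_def by force
qed

lemma gaussian_convolution_injective:
  fixes S :: "real^'n^'n" and K :: "(real^'n) measure" and D :: "real^'n \<Rightarrow> real"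
  assumes S: "pos_definite S" "transpose S = S"
    and b: "\<And>i. b i \<noteq> 0"
    and D: "D \<in> borel_measurable borel" "\<And>v. \<bar>D v\<bar> \<le> B"
    and K: "sets K = sets borel" "support_of K = UNIV"
    and convolution_zero: "AE z in K. (\<integral>e. D ((\<chi> i. b i * z$i) - e) \<partial>mvn S) = 0"
  shows "AE v in lborel. D v = 0"
proof -
  define A where "A = matrix_inv S"
  define L where "L t = (\<integral>v. D v * exp (- (v \<bullet> (A *v v)) / 2) * exp (t \<bullet> v) \<partial>lborel)" for t
  define C where "C = A ** (\<chi> i j. if i = j then b i else 0)"
  have A: "pos_definite A"
    unfolding A_def using S by (rule pos_definite_matrix_inv)
  have "AE z in K. L (C *v z) = 0"
    using convolution_zero
  proof (rule AE_mp, intro AE_I2 impI)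
    fix z assume "(\<integral>e. D ((\<chi> i. b i * z$i) - e) \<partial>mvn S) = 0"
    then show "L (C *v z) = 0"
      using integral_mvn_shift[OF S D(1)] pos_definite_det_pos[OF S(1)]
      by (simp add: L_def A_def C_def diagonal_matrix_vector_mult matrix_vector_mul_assoc[symmetric])
  qed
  moreover have "continuous_on UNIV (\<lambda>z. L (C *v z))"
    unfolding L_def
    by (intro continuous_on_compose2[OF continuous_on_laplace_gaussian_damped[OF A D]]
        linear_continuous_on matrix_vector_mul_bounded_linear) auto
  ultimately have L_C_zero: "L (C *v z) = 0" for z
    using zero_if_AE_zero_full_support[OF K] by blast
  \<comment> \<open>\<open>C\<close> is invertible, so the Laplace transform vanishes everywhere\<close>
  have "L t = 0" for t
  proof -
    have "C *v (\<chi> i. (S *v t)$i / b i) = A *v (S *v t)"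
      using b by (simp add: C_def diagonal_matrix_vector_mult matrix_vector_mul_assoc[symmetric])
    also have "\<dots> = t"
      using pos_definite_invertible[OF S(1)]
      by (simp add: A_def matrix_vector_mul_assoc matrix_inv_left)
    finally show ?thesis
      using L_C_zero by metis
  qed
  then have "AE v in lborel. D v * exp (- (v \<bullet> (A *v v)) / 2) = 0"
    using D(1) integrable_gaussian_damped_exp[OF A D]
    by (intro AE_zero_if_laplace_transform_zero) (auto simp: L_def)
  then show ?thesis
    by (rule AE_mp) (intro AE_I2, simp)
qed

lemma gaussian_convolution_eq_imp_AE_eq:
  fixes S :: "real^'n^'n" and K :: "(real^'n) measure" and c0 c1 :: "real^'n \<Rightarrow> real"
  assumes S: "pos_definite S" "transpose S = S"
    and b: "\<And>i. b i \<noteq> 0"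
    and c_measurable: "c0 \<in> borel_measurable borel" "c1 \<in> borel_measurable borel"
    and c_bounded: "\<And>v. \<bar>c0 v\<bar> \<le> B" "\<And>v. \<bar>c1 v\<bar> \<le> B"
    and K: "sets K = sets borel" "support_of K = UNIV"
    and convolutions_eq: "AE z in K.
      (\<integral>e. c0 ((\<chi> i. b i * z$i) - e) \<partial>mvn S) = (\<integral>e. c1 ((\<chi> i. b i * z$i) - e) \<partial>mvn S)"
  shows "AE v in lborel. c0 v = c1 v"
proof -
  have integrable: "integrable (mvn S) (\<lambda>e. c (u - e))"
    if "c \<in> borel_measurable borel" "\<And>v. \<bar>c v\<bar> \<le> B" for c :: "real^'n \<Rightarrow> real" and u
    using that
    by (intro finite_measure.integrable_const_bound[OF finite_measure_mvn[OF S], where B=B]) auto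
  have "AE v in lborel. c0 v - c1 v = 0"
  proof (rule gaussian_convolution_injective[OF S b _ _ K])
    show "(\<lambda>v. c0 v - c1 v) \<in> borel_measurable borel"
      using c_measurable by measurable
    show "\<bar>c0 v - c1 v\<bar> \<le> 2 * B" for v
      using c_bounded[of v] by linarith
    show "AE z in K. (\<integral>e. c0 ((\<chi> i. b i * z$i) - e) - c1 ((\<chi> i. b i * z$i) - e) \<partial>mvn S) = 0"
      using convolutions_eq
      by eventually_elim
        (simp add: integrable c_measurable c_bounded Bochner_Integration.integral_diff)
  qed
  then show ?thesis
    by (rule eventually_mono) simp
qed

section \<open>Disintegration of the covariate distribution\<close>

lemma borel_measurable_section:
  fixes f :: "'a::second_countable_topology \<Rightarrow> 'b::second_countable_topology \<Rightarrow> 'c::topological_space"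
  assumes "(\<lambda>(a, b). f a b) \<in> borel_measurable borel"
  shows "f a \<in> borel_measurable borel"
  using measurable_Pair2[of "\<lambda>(a, b). f a b" borel borel _ a] assms by (simp add: borel_prod)

lemma AE_in_support:
  fixes \<mu> :: "'a::second_countable_topology measure"
  assumes "sets \<mu> = sets borel"
  shows "AE w in \<mu>. w \<in> support_of \<mu>"
proof -
  define F where "F = {U. open U \<and> emeasure \<mu> U = 0}"
  obtain F' where F': "F' \<subseteq> F" "countable F'" "\<Union>F' = \<Union>F"
    using Lindelof[of F] unfolding F_def by auto
  have "(\<Union>U\<in>F'. U) \<in> null_sets \<mu>"
    using F'(1) assms by (intro null_sets_UN'[OF F'(2)]) (auto simp: F_def null_sets_def)
  then have "AE w in \<mu>. w \<notin> (\<Union>U\<in>F'. U)"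
    by (rule AE_not_in)
  then show ?thesis
    by (rule AE_mp) (use F'(3) in \<open>auto intro!: AE_I2 simp: support_of_def F_def zero_less_iff_neq_zero\<close>)
qed

lemma sets_cond_dist_z_given_w:
  assumes "cond_dist_z_given_w Px Kz"
  shows "sets (Kz w) = sets borel"
  using assms measurable_space[of Kz borel "prob_algebra borel" w]
  by (simp add: cond_dist_z_given_w_def space_prob_algebra)

lemma measurable_cond_dist_z_given_w_pair:
  fixes Kz :: "'w::euclidean_space \<Rightarrow> (real^'i) measure"
  assumes "cond_dist_z_given_w Px Kz"
  shows "(\<lambda>w. distr (Kz w) borel (\<lambda>z. (z, w))) \<in> borel \<rightarrow>\<^sub>M subprob_algebra borel"
proof (rule measurable_distr2[where f="\<lambda>w z. (z, w)"])
  show "Kz \<in> borel \<rightarrow>\<^sub>M subprob_algebra borel"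
    using assms measurable_prob_algebraD by (auto simp: cond_dist_z_given_w_def)
qed (simp add: borel_prod[symmetric])

lemma emeasure_distr_Pair_Times:
  fixes K :: "'a::second_countable_topology measure" and w :: "'b::second_countable_topology"
  assumes "sets K = sets borel" "a \<in> sets borel" "b \<in> sets borel"
  shows "emeasure (distr K borel (\<lambda>z. (z, w))) (a \<times> b) = indicator b w * emeasure K a"
proof -
  have "(\<lambda>z. (z, w)) \<in> K \<rightarrow>\<^sub>M borel"
    by (simp add: measurable_cong_sets[OF assms(1) refl] borel_prod[symmetric])
  moreover have "(\<lambda>z. (z, w)) -` (a \<times> b) \<inter> space K = (if w \<in> b then a else {})"
    by (auto simp: sets_eq_imp_space_eq[OF assms(1)])
  ultimately show ?thesis
    using assms(2,3) unfolding borel_prod[symmetric] by (simp add: emeasure_distr indicator_def)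
qed

lemma cond_dist_z_given_w_eq_bind:
  fixes Px :: "((real^'i) \<times> 'w::euclidean_space) measure"
  assumes "prob_space Px" "sets Px = sets borel" "cond_dist_z_given_w Px Kz"
  shows "Px = distr Px borel snd \<bind> (\<lambda>w. distr (Kz w) borel (\<lambda>z. (z, w)))"
    (is "Px = ?\<mu> \<bind> ?N")
proof -
  have sets_Kz: "sets (Kz w) = sets borel" for w
    using assms(3) by (rule sets_cond_dist_z_given_w)
  have N_measurable: "?N \<in> ?\<mu> \<rightarrow>\<^sub>M subprob_algebra borel"
    using measurable_cond_dist_z_given_w_pair[OF assms(3)]
    by (simp add: measurable_cong_sets[OF sets_distr refl])
  let ?rectangles = "{a \<times> b | a b. a \<in> sets (borel :: (real^'i) measure) \<and> b \<in> sets (borel :: 'w measure)}"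
  have sets_rectangles: "sets (borel :: ((real^'i) \<times> 'w) measure) = sigma_sets UNIV ?rectangles"
    unfolding borel_prod[symmetric] sets_pair_measure by simp
  show ?thesis
  proof (rule measure_eqI_generator_eq[where E="?rectangles" and \<Omega>=UNIV and A="\<lambda>_. UNIV"])
    show "sets Px = sigma_sets UNIV ?rectangles"
      using assms(2) sets_rectangles by simp
    show "sets (?\<mu> \<bind> ?N) = sigma_sets UNIV ?rectangles"
      using sets_rectangles by (subst sets_bind) auto
    show "range (\<lambda>_. UNIV) \<subseteq> ?rectangles"
      by (auto intro!: exI[of _ UNIV])
    show "emeasure Px UNIV \<noteq> \<infinity>"
      using prob_space.emeasure_space_1[OF assms(1)] sets_eq_imp_space_eq[OF assms(2)] by simp
    fix X assume "X \<in> ?rectangles"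
    then obtain a b where X: "X = a \<times> b" and ab: "a \<in> sets borel" "b \<in> sets borel"
      by auto
    have "emeasure (?\<mu> \<bind> ?N) X = (\<integral>\<^sup>+w. emeasure (?N w) X \<partial>?\<mu>)"
      by (rule emeasure_bind[OF _ N_measurable]) (use ab in \<open>auto simp: X borel_prod[symmetric]\<close>)
    also have "\<dots> = (\<integral>\<^sup>+w. indicator b w * emeasure (Kz w) a \<partial>?\<mu>)"
      using ab sets_Kz unfolding X by (simp add: emeasure_distr_Pair_Times)
    also have "\<dots> = emeasure Px X"
      using assms(3) ab unfolding X cond_dist_z_given_w_def by simp
    finally show "emeasure Px X = emeasure (?\<mu> \<bind> ?N) X" ..
  qed (auto intro: Int_stable_pair_measure_generator)
qed

lemma AE_cond_dist_z_given_w: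
  fixes Px :: "((real^'i) \<times> 'w::euclidean_space) measure"
  assumes "prob_space Px" "sets Px = sets borel" "cond_dist_z_given_w Px Kz"
    and "AE x in Px. P x"
  shows "AE w in distr Px borel snd. AE z in Kz w. P (z, w)"
proof -
  have sets_Kz: "sets (Kz w) = sets borel" for w
    using assms(3) by (rule sets_cond_dist_z_given_w)
  \<comment> \<open>\<open>P\<close> need not be measurable, so pass to a measurable null set outside of which it holds\<close>
  obtain N0 where N0: "{x \<in> space Px. \<not> P x} \<subseteq> N0" "emeasure Px N0 = 0" "N0 \<in> sets Px"
    using assms(4) by (rule AE_E)
  then have [measurable]: "N0 \<in> sets borel"
    using assms(2) by simp
  have "AE x in Px. x \<notin> N0"
    using N0 by (intro AE_not_in) auto
  then have "AE x in distr Px borel snd \<bind> (\<lambda>w. distr (Kz w) borel (\<lambda>z. (z, w))). x \<notin> N0"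
    by (subst (asm) cond_dist_z_given_w_eq_bind[OF assms(1-3)])
  then have "AE w in distr Px borel snd. AE y in distr (Kz w) borel (\<lambda>z. (z, w)). y \<notin> N0"
    using measurable_cond_dist_z_given_w_pair[OF assms(3)]
    by (subst (asm) AE_bind) (auto simp: measurable_cong_sets[OF sets_distr refl])
  moreover have "(\<lambda>z. (z, w)) \<in> Kz w \<rightarrow>\<^sub>M borel" for w
    by (simp add: measurable_cong_sets[OF sets_Kz refl] borel_prod[symmetric])
  ultimately have "AE w in distr Px borel snd. AE z in Kz w. (z, w) \<notin> N0"
    by (auto elim!: AE_mp intro!: AE_I2 simp: AE_distr_iff)
  then show ?thesis
  proof (rule eventually_mono)
    fix w assume "AE z in Kz w. (z, w) \<notin> N0"
    then show "AE z in Kz w. P (z, w)"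
      by (rule eventually_mono) (use N0(1) sets_eq_imp_space_eq[OF assms(2)] in auto)
  qed
qed

section \<open>Identification of the distribution of play\<close>

lemma index_v_eq_diff: "index_v \<beta> x e = (\<chi> i. \<beta> i (snd x) * fst x $ i) - e"
  by (simp add: index_v_def vec_eq_iff)

lemma bounded_measurable_version:
  fixes g :: "'x \<Rightarrow> 'e \<Rightarrow> real"
    and f :: "'w::second_countable_topology \<Rightarrow> 'v::second_countable_topology \<Rightarrow> real"
  assumes "\<And>x e. \<bar>g x e\<bar> \<le> B" "(\<lambda>(w, v). f w v) \<in> borel_measurable borel"
    and "AE x in M. AE e in N x. g x e = f (p x) (q x e)"
  obtains c where "\<And>w. c w \<in> borel_measurable borel" "\<And>w v. \<bar>c w v\<bar> \<le> B"
    and "AE x in M. AE e in N x. g x e = c (p x) (q x e)"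
proof
  \<comment> \<open>truncation at the bound of \<open>g\<close> does not change \<open>f\<close> where it agrees with \<open>g\<close>\<close>
  let ?c = "\<lambda>w v. max (- B) (min B (f w v))"
  show "?c w \<in> borel_measurable borel" for w
    using borel_measurable_section[OF assms(2), of w] by measurable
  show "\<bar>?c w v\<bar> \<le> B" for w v
    using order_trans[OF abs_ge_zero assms(1)] by (auto simp: abs_le_iff)
  have "g x e = ?c w v" if "g x e = f w v" for x e w v
    using that assms(1)[of x e] by (auto simp: abs_le_iff)
  then show "AE x in M. AE e in N x. g x e = ?c (p x) (q x e)"
    using assms(3) by (auto elim!: eventually_mono)
qed

lemma versions_AE_eq_if_mvn_integrals_eq:
  fixes S :: "real^'n^'n" and K :: "(real^'n) measure"
    and g0 g1 :: "real^'n \<Rightarrow> real^'n \<Rightarrow> real" and c0 c1 :: "real^'n \<Rightarrow> real"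
  assumes S: "pos_definite S" "transpose S = S"
    and b: "\<And>i. b i \<noteq> 0"
    and K: "sets K = sets borel" "support_of K = UNIV"
    and g_measurable: "\<And>z. g0 z \<in> borel_measurable borel" "\<And>z. g1 z \<in> borel_measurable borel"
    and c_measurable: "c0 \<in> borel_measurable borel" "c1 \<in> borel_measurable borel"
    and c_bounded: "\<And>v. \<bar>c0 v\<bar> \<le> B" "\<And>v. \<bar>c1 v\<bar> \<le> B"
    and versions_integrals_eq: "AE z in K.
      (AE e in mvn S. g0 z e = c0 ((\<chi> i. b i * z$i) - e)) \<and>
      (AE e in mvn S. g1 z e = c1 ((\<chi> i. b i * z$i) - e)) \<and>
      (\<integral>e. g0 z e \<partial>mvn S) = (\<integral>e. g1 z e \<partial>mvn S)"
  shows "AE v in lborel. c0 v = c1 v"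
  using S b c_measurable c_bounded K
proof (rule gaussian_convolution_eq_imp_AE_eq)
  have integral_version: "(\<integral>e. g e \<partial>mvn S) = (\<integral>e. c ((\<chi> i. b i * z$i) - e) \<partial>mvn S)"
    if "g \<in> borel_measurable borel" "c \<in> borel_measurable borel"
      "AE e in mvn S. g e = c ((\<chi> i. b i * z$i) - e)" for g c z
    using that by (intro integral_cong_AE) (simp_all add: measurable_cong_sets[OF sets_mvn refl])
  show "AE z in K.
      (\<integral>e. c0 ((\<chi> i. b i * z$i) - e) \<partial>mvn S) = (\<integral>e. c1 ((\<chi> i. b i * z$i) - e) \<partial>mvn S)"
    using versions_integrals_eq
  proof eventually_elim
    case (elim z)
    then show ?case
      using integral_version[OF g_measurable(1)[of z] c_measurable(1), of z]
        integral_version[OF g_measurable(2)[of z] c_measurable(2), of z] by simp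
  qed
qed

lemma AE_eq_if_index_versions_and_mvn_integrals_eq:
  fixes Px :: "((real^'i) \<times> 'w::euclidean_space) measure"
    and g0 g1 :: "((real^'i) \<times> 'w) \<Rightarrow> real^'i \<Rightarrow> real" and f0 f1 :: "'w \<Rightarrow> real^'i \<Rightarrow> real"
  assumes Px: "prob_space Px" "sets Px = sets borel" "cond_dist_z_given_w Px Kz"
    and A1: "assm_A1 Px Kz \<beta>" and A2: "assm_A2 Px \<Sigma>"
    and g_measurable: "(\<lambda>(x, e). g0 x e) \<in> borel_measurable borel" "(\<lambda>(x, e). g1 x e) \<in> borel_measurable borel"
    and g_bounded: "\<And>x e. \<bar>g0 x e\<bar> \<le> B" "\<And>x e. \<bar>g1 x e\<bar> \<le> B"
    and f_measurable: "(\<lambda>(w, v). f0 w v) \<in> borel_measurable borel" "(\<lambda>(w, v). f1 w v) \<in> borel_measurable borel"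
    and versions: "AE x in Px. AE e in mvn (\<Sigma> (snd x)). g0 x e = f0 (snd x) (index_v \<beta> x e)"
      "AE x in Px. AE e in mvn (\<Sigma> (snd x)). g1 x e = f1 (snd x) (index_v \<beta> x e)"
    and integrals_eq: "AE x in Px. (\<integral>e. g0 x e \<partial>mvn (\<Sigma> (snd x))) = (\<integral>e. g1 x e \<partial>mvn (\<Sigma> (snd x)))"
  shows "AE x in Px. AE e in mvn (\<Sigma> (snd x)). g1 x e = g0 x e"
proof -
  obtain c0 where c0: "\<And>w. c0 w \<in> borel_measurable borel" "\<And>w v. \<bar>c0 w v\<bar> \<le> B"
    "AE x in Px. AE e in mvn (\<Sigma> (snd x)). g0 x e = c0 (snd x) (index_v \<beta> x e)"
    using bounded_measurable_version[OF g_bounded(1) f_measurable(1) versions(1)] by blast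
  obtain c1 where c1: "\<And>w. c1 w \<in> borel_measurable borel" "\<And>w v. \<bar>c1 w v\<bar> \<le> B"
    "AE x in Px. AE e in mvn (\<Sigma> (snd x)). g1 x e = c1 (snd x) (index_v \<beta> x e)"
    using bounded_measurable_version[OF g_bounded(2) f_measurable(2) versions(2)] by blast
  define P where "P x \<longleftrightarrow>
      (AE e in mvn (\<Sigma> (snd x)). g0 x e = c0 (snd x) (index_v \<beta> x e)) \<and>
      (AE e in mvn (\<Sigma> (snd x)). g1 x e = c1 (snd x) (index_v \<beta> x e)) \<and>
      (\<integral>e. g0 x e \<partial>mvn (\<Sigma> (snd x))) = (\<integral>e. g1 x e \<partial>mvn (\<Sigma> (snd x)))" for x
  have "AE x in Px. P x"
    using c0(3) c1(3) integrals_eq unfolding P_def by eventually_elim simp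
  let ?\<mu> = "distr Px borel snd"
  have "AE w in ?\<mu>. w \<in> support_of ?\<mu> \<and> (AE z in Kz w. P (z, w))"
    using AE_in_support[of ?\<mu>] AE_cond_dist_z_given_w[OF Px \<open>AE x in Px. P x\<close>] by (auto elim: AE_mp)
  moreover have "AE v in lborel. c0 w v = c1 w v"
    if "w \<in> support_of ?\<mu>" "AE z in Kz w. P (z, w)" for w
  proof (rule versions_AE_eq_if_mvn_integrals_eq[OF _ _ _ _ _ _ _ c0(1) c1(1) c0(2) c1(2)])
    show "pos_definite (\<Sigma> w)" "transpose (\<Sigma> w) = \<Sigma> w"
      using A2 that(1) by (auto simp: assm_A2_def pos_definite_def)
    show "\<beta> i w \<noteq> 0" "support_of (Kz w) = UNIV" for i
      using A1 that(1) by (auto simp: assm_A1_def)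
    show "sets (Kz w) = sets borel"
      using Px(3) by (rule sets_cond_dist_z_given_w)
    show "g0 (z, w) \<in> borel_measurable borel" "g1 (z, w) \<in> borel_measurable borel" for z
      using g_measurable by (auto intro: borel_measurable_section)
    show "AE z in Kz w. (AE e in mvn (\<Sigma> w). g0 (z, w) e = c0 w ((\<chi> i. \<beta> i w * z$i) - e)) \<and>
        (AE e in mvn (\<Sigma> w). g1 (z, w) e = c1 w ((\<chi> i. \<beta> i w * z$i) - e)) \<and>
        (\<integral>e. g0 (z, w) e \<partial>mvn (\<Sigma> w)) = (\<integral>e. g1 (z, w) e \<partial>mvn (\<Sigma> w))"
      using that(2) unfolding P_def index_v_eq_diff fst_conv snd_conv .
  qed
  ultimately have "AE w in ?\<mu>. AE v in lborel. c0 w v = c1 w v"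
    by (auto elim: eventually_mono)
  then have "AE x in Px. AE v in lborel. c0 (snd x) v = c1 (snd x) v"
    by (rule AE_distrD[rotated]) (simp add: measurable_cong_sets[OF Px(2) refl] borel_prod[symmetric])
  then show ?thesis
    using \<open>AE x in Px. P x\<close> unfolding P_def
  proof eventually_elim
    case (elim x)
    then have "AE e in mvn (\<Sigma> (snd x)). c0 (snd x) (index_v \<beta> x e) = c1 (snd x) (index_v \<beta> x e)"
      unfolding index_v_eq_diff by (intro AE_mvn_reflect) simp
    with elim show ?case
      by (auto elim: AE_mp)
  qed
qed

theorem proposition2:
  fixes Px :: "((real^'i::finite) \<times> 'w::euclidean_space) measure"
    and Kz :: "'w \<Rightarrow> (real^'i) measure"
    and \<alpha> :: "'i \<Rightarrow> 'i set \<Rightarrow> 'w \<Rightarrow> real"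
    and \<beta> :: "'i \<Rightarrow> 'w \<Rightarrow> real"
    and \<Sigma> :: "'w \<Rightarrow> real^'i^'i"
    and h0 h' :: "('i \<Rightarrow> bool) \<Rightarrow> ((real^'i) \<times> 'w) \<Rightarrow> real^'i \<Rightarrow> real"
  assumes "CARD('i) \<ge> 2"
    and "prob_space Px" and "sets Px = sets borel"
    and "cond_dist_z_given_w Px Kz"
    and "in_Theta \<alpha> \<beta> \<Sigma>"
    and "distribution_of_play h0" and "distribution_of_play h'"
    and "assm_A1 Px Kz \<beta>" and "assm_A2 Px \<Sigma>"
    and "assm_A3 Px \<beta> \<Sigma> h0" and "assm_A3 Px \<beta> \<Sigma> h'"
    and "AE x in Px. \<forall>y. cond_exp_play h0 \<Sigma> x y = cond_exp_play h' \<Sigma> x y"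
  shows "AE x in Px. AE e in mvn (\<Sigma> (snd x)). \<forall>y. h' y x e = h0 y x e"
proof -
  \<comment> \<open>The argument runs outcome by outcome and never involves the payoffs \<open>\<alpha>\<close>.\<close>
  obtain ht0 ht1 :: "('i \<Rightarrow> bool) \<Rightarrow> 'w \<Rightarrow> real^'i \<Rightarrow> real" where
    ht_measurable: "\<And>y. (\<lambda>(w, v). ht0 y w v) \<in> borel_measurable borel"
      "\<And>y. (\<lambda>(w, v). ht1 y w v) \<in> borel_measurable borel"
    and ht_versions: "AE x in Px. AE e in mvn (\<Sigma> (snd x)). \<forall>y. h0 y x e = ht0 y (snd x) (index_v \<beta> x e)"
      "AE x in Px. AE e in mvn (\<Sigma> (snd x)). \<forall>y. h' y x e = ht1 y (snd x) (index_v \<beta> x e)"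
    using assms(10,11) unfolding assm_A3_def by blast
  have "AE x in Px. AE e in mvn (\<Sigma> (snd x)). h' y x e = h0 y x e" for y
  proof (rule AE_eq_if_index_versions_and_mvn_integrals_eq[OF assms(2-4,8,9), where B=1])
    show "(\<lambda>(x, e). h0 y x e) \<in> borel_measurable borel" "(\<lambda>(x, e). h' y x e) \<in> borel_measurable borel"
      using assms(6,7) unfolding distribution_of_play_def by blast+
    show "\<bar>h0 y x e\<bar> \<le> 1" "\<bar>h' y x e\<bar> \<le> 1" for x e
      using assms(6,7) unfolding distribution_of_play_def abs_le_iff by (meson order_trans neg_le_0_iff_le zero_le_one)+
    show "AE x in Px. AE e in mvn (\<Sigma> (snd x)). h0 y x e = ht0 y (snd x) (index_v \<beta> x e)"
      using ht_versions(1) by (auto elim!: eventually_mono)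
    show "AE x in Px. AE e in mvn (\<Sigma> (snd x)). h' y x e = ht1 y (snd x) (index_v \<beta> x e)"
      using ht_versions(2) by (auto elim!: eventually_mono)
    show "AE x in Px. (\<integral>e. h0 y x e \<partial>mvn (\<Sigma> (snd x))) = (\<integral>e. h' y x e \<partial>mvn (\<Sigma> (snd x)))"
      using assms(12) by (auto elim!: eventually_mono simp: cond_exp_play_def)
  qed (use ht_measurable in auto)
  then show ?thesis
    by (simp add: AE_all_countable)
qed

end
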